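(* Protocol $\Pi_{4PC}$ (described in the context) is correct: for every wire of the circuit, the parties hold a $[\![\cdot]\!]$-sharing of the value carried by that wire when the circuit is evaluated on the parties' inputs, so that the values reconstructed at the output wires equal the outputs of the circuit on those inputs.
   Context: Four parties $P_0,P_1,P_2,P_3$ are connected by pairwise private and authentic channels in a synchronous network. The function is given as a publicly known circuit over the ring $\mathbb{Z}_{2^\ell}$ made of 2-input addition and multiplication gates. Parties have pre-shared PRF keys for every subset of parties, so any subset can non-interactively sample common random values; $H$ is a collision-resistant hash function. Sharings over $\mathbb{Z}_{2^\ell}$: a value $v$ is $\langle\cdot\rangle$-shared among $P_1,P_2,P_3$ if $v=v_1+v_2+v_3$ and $P_1$ holds $(v_2,v_3)$, $P_2$ holds $(v_3,v_1)$, $P_3$ holds $(v_1,v_2)$. A value $v$ is $[\![\cdot]\!]$-shared if there are $\lambda_v,m_v$ with $m_v=v+\lambda_v$, $P_1,P_2,P_3$ all know $m_v$, $\lambda_v=\lambda_{v,1}+\lambda_{v,2}+\lambda_{v,3}$ is $\langle\cdot\rangle$-shared among $P_1,P_2,P_3$, and $P_0$ knows $\lambda_{v,1},\lambda_{v,2},\lambda_{v,3}$. Protocol $\Pi_{4PC}$: (1) Input sharing: for an input $v$ of party $P_i$, offline the $\lambda_{v,j}$ are sampled non-interactively so that $\lambda_{v,j}$ is known to all parties except $P_j$ ($j\in\{1,2,3\}$), and additionally known to $P_i$ (if $P_i=P_k$, $k\in\{1,2,3\}$, $\lambda_{v,k}$ is sampled by all four parties); online $P_i$ sends $m_v=v+\lambda_v$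 to $P_1,P_2,P_3$, who exchange $H(m_v)$ and abort on mismatch. (2) Addition gates are evaluated locally by linearity. (3) Multiplication gate $z=xy$: offline, $\lambda_{z,j}$ is sampled by all parties but $P_j$; the parties obtain $A,B,\Gamma$ with $A+B+\Gamma=0$, where $P_0,P_1$ know $A$, $P_0,P_2$ know $B$, $P_0,P_3$ know $\Gamma$; $P_0,P_1$ compute $\gamma_2=\lambda_{x,2}\lambda_{y,2}+\lambda_{x,2}\lambda_{y,3}+\lambda_{x,3}\lambda_{y,2}+A$, $P_0,P_2$ compute $\gamma_3=\lambda_{x,3}\lambda_{y,3}+\lambda_{x,3}\lambda_{y,1}+\lambda_{x,1}\lambda_{y,3}+B$, $P_0,P_3$ compute $\gamma_1=\lambda_{x,1}\lambda_{y,1}+\lambda_{x,1}\lambda_{y,2}+\lambda_{x,2}\lambda_{y,1}+\Gamma$; $P_1$ receives $\gamma_3$ from $P_2$ and $H(\gamma_3)$ from $P_0$, $P_2$ receives $\gamma_1$ from $P_3$ and $H(\gamma_1)$ from $P_0$, $P_3$ receives $\gamma_2$ from $P_1$ and $H(\gamma_2)$ from $P_0$, aborting on inconsistency. Online, $P_1,P_3$ compute $m'_2=-\lambda_{x,2}m_y-\lambda_{y,2}m_x+\gamma_2+\lambda_{z,2}$, $P_2,P_1$ compute $m'_3=-\lambda_{x,3}m_y-\lambda_{y,3}m_x+\gamma_3+\lambda_{z,3}$, $P_3,P_2$ compute $m'_1=-\lambda_{x,1}m_y-\lambda_{y,1}m_x+\gamma_1+\lambda_{z,1}$; $P_1$ receives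 $m'_1$ from $P_2$ and $H(m'_1)$ from $P_3$, $P_2$ receives $m'_2$ from $P_3$ and $H(m'_2)$ from $P_1$, $P_3$ receives $m'_3$ from $P_1$ and $H(m'_3)$ from $P_2$; they abort on inconsistency, else set $m_z=m'_1+m'_2+m'_3+m_xm_y$. (4) Output reconstruction of $v$: $P_1$ receives $\lambda_{v,1}$ from $P_2$ and its hash from $P_0$; $P_2$ receives $\lambda_{v,2}$ from $P_3$ and its hash from $P_0$; $P_3$ receives $\lambda_{v,3}$ from $P_1$ and its hash from $P_0$; $P_0$ receives $m_v$ from $P_1$ and its hash from $P_2$; each party aborts on inconsistency, else outputs $v=m_v-\lambda_{v,1}-\lambda_{v,2}-\lambda_{v,3}$. *)

theory Defs
  imports "HOL-Library.Word"
begin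

text \<open>The ring Z_{2^l} is modelled by the type 'l word (l = LENGTH('l)).
  A circuit is a straight-line list of gates; wire w is the output of gate w.
  Gates refer to earlier wires only (see wf_circ).\<close>

datatype gate = Inp nat | AddG nat nat | MulG nat nat
  (* Inp p : input wire owned by party P_p; AddG/MulG i j : gate on wires i, j *)

definition wf_circ :: "gate list \<Rightarrow> bool" where
  "wf_circ C \<longleftrightarrow> (\<forall>w<length C. case C ! w of
      Inp p \<Rightarrow> p \<le> 3
    | AddG i j \<Rightarrow> i < w \<and> j < w
    | MulG i j \<Rightarrow> i < w \<and> j < w)"

definition eval_step :: "(nat \<Rightarrow> 'l::len word) \<Rightarrow> 'l word list \<Rightarrow> gate \<Rightarrow> 'l word list" where
  "eval_step x vs g = vs @ [case g of
      Inp p \<Rightarrow> x (length vs)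
    | AddG i j \<Rightarrow> vs ! i + vs ! j
    | MulG i j \<Rightarrow> vs ! i * vs ! j]"

definition eval_circ :: "gate list \<Rightarrow> (nat \<Rightarrow> 'l::len word) \<Rightarrow> 'l word list" where
  "eval_circ C x = foldl (eval_step x) [] C"

text \<open>Local state of the four parties for one wire v.
  P0 holds (lambda_{v,1}, lambda_{v,2}, lambda_{v,3});
  P1 holds (m_v, lambda_{v,2}, lambda_{v,3});
  P2 holds (m_v, lambda_{v,3}, lambda_{v,1});
  P3 holds (m_v, lambda_{v,1}, lambda_{v,2}),
  each as computed by that party from its own data and received messages.\<close>
type_synonym 'l pst = "'l word \<times> 'l word \<times> 'l word"
type_synonym 'l wst = "'l pst \<times> 'l pst \<times> 'l pst \<times> 'l pst"

definition is_sharing :: "'l::len wst \<Rightarrow> 'l word \<Rightarrow> bool" where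
  "is_sharing st v \<longleftrightarrow> (\<exists>m l1 l2 l3. m = v + (l1 + l2 + l3) \<and>
      st = ((l1, l2, l3), (m, l2, l3), (m, l3, l1), (m, l1, l2)))"

fun add_pst :: "'l::len pst \<Rightarrow> 'l pst \<Rightarrow> 'l pst" where
  "add_pst (a, b, c) (a', b', c') = (a + a', b + b', c + c')"

text \<open>Honest execution of one gate (wire w = length sts).
  r w j : the common PRF value lambda_{w,j} (sampled by all parties but P_j,
          or by all four parties for the owner's index at input wires);
  rA w, rB w : the values A, B of a multiplication gate (Gamma = -A-B);
  H : the hash function. Returns new state and the set of aborting parties.\<close>
definition prot_gate :: "(nat \<Rightarrow> nat \<Rightarrow> 'l::len word) \<Rightarrow> (nat \<Rightarrow> 'l word) \<Rightarrow> (nat \<Rightarrow> 'l word)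
    \<Rightarrow> ('l word \<Rightarrow> 'h) \<Rightarrow> (nat \<Rightarrow> 'l word) \<Rightarrow> 'l wst list \<Rightarrow> gate \<Rightarrow> 'l wst \<times> nat set" where
  "prot_gate r rA rB H x sts g = (let w = length sts in case g of
     Inp p \<Rightarrow>
       (let l1 = r w 1; l2 = r w 2; l3 = r w 3;
            m = x w + (l1 + l2 + l3);   \<comment> \<open>computed by owner P_p, sent to P1,P2,P3\<close>
            m1 = m; m2 = m; m3 = m;     \<comment> \<open>values received by P1, P2, P3\<close>
            rc = (\<lambda>i::nat. if i = 1 then m1 else if i = 2 then m2 else m3);
            ab = {i\<in>{1,2,3}. \<exists>j\<in>{1,2,3}. H (rc i) \<noteq> H (rc j)}
        in (((l1, l2, l3), (m1, l2, l3), (m2, l3, l1), (m3, l1, l2)), ab))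
   | AddG i j \<Rightarrow>
       (let (a0, a1, a2, a3) = sts ! i; (b0, b1, b2, b3) = sts ! j
        in ((add_pst a0 b0, add_pst a1 b1, add_pst a2 b2, add_pst a3 b3), {}))
   | MulG i j \<Rightarrow>
       (let ((x1, x2, x3), (mxP1, x2P1, x3P1), (mxP2, x3P2, x1P2), (mxP3, x1P3, x2P3)) = sts ! i;
            ((y1, y2, y3), (myP1, y2P1, y3P1), (myP2, y3P2, y1P2), (myP3, y1P3, y2P3)) = sts ! j;
            z1 = r w 1; z2 = r w 2; z3 = r w 3;
            A = rA w; B = rB w; G = - A - B;
            \<comment> \<open>offline: gamma values as computed by the respective parties\<close>
            g2P0 = x2 * y2 + x2 * y3 + x3 * y2 + A;
            g2P1 = x2P1 * y2P1 + x2P1 * y3P1 + x3P1 * y2P1 + A;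
            g3P0 = x3 * y3 + x3 * y1 + x1 * y3 + B;
            g3P2 = x3P2 * y3P2 + x3P2 * y1P2 + x1P2 * y3P2 + B;
            g1P0 = x1 * y1 + x1 * y2 + x2 * y1 + G;
            g1P3 = x1P3 * y1P3 + x1P3 * y2P3 + x2P3 * y1P3 + G;
            \<comment> \<open>P1 gets gamma3 from P2 (hash from P0), P2 gets gamma1 from P3, P3 gets gamma2 from P1\<close>
            g3atP1 = g3P2; g1atP2 = g1P3; g2atP3 = g2P1;
            ab_off = {p. (p = 1 \<and> H g3atP1 \<noteq> H g3P0) \<or> (p = 2 \<and> H g1atP2 \<noteq> H g1P0)
                         \<or> (p = 3 \<and> H g2atP3 \<noteq> H g2P0)};
            \<comment> \<open>online\<close>
            m2P1 = - x2P1 * myP1 - y2P1 * mxP1 + g2P1 + z2;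
            m2P3 = - x2P3 * myP3 - y2P3 * mxP3 + g2atP3 + z2;
            m3P2 = - x3P2 * myP2 - y3P2 * mxP2 + g3P2 + z3;
            m3P1 = - x3P1 * myP1 - y3P1 * mxP1 + g3atP1 + z3;
            m1P3 = - x1P3 * myP3 - y1P3 * mxP3 + g1P3 + z1;
            m1P2 = - x1P2 * myP2 - y1P2 * mxP2 + g1atP2 + z1;
            \<comment> \<open>P1 gets m'1 from P2 (hash from P3), P2 gets m'2 from P3 (hash from P1),
                P3 gets m'3 from P1 (hash from P2)\<close>
            m1atP1 = m1P2; m2atP2 = m2P3; m3atP3 = m3P1;
            ab_on = {p. (p = 1 \<and> H m1atP1 \<noteq> H m1P3) \<or> (p = 2 \<and> H m2atP2 \<noteq> H m2P1)
                        \<or> (p = 3 \<and> H m3atP3 \<noteq> H m3P2)};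
            mzP1 = m1atP1 + m2P1 + m3P1 + mxP1 * myP1;
            mzP2 = m1P2 + m2atP2 + m3P2 + mxP2 * myP2;
            mzP3 = m1P3 + m2P3 + m3atP3 + mxP3 * myP3
        in (((z1, z2, z3), (mzP1, z2, z3), (mzP2, z3, z1), (mzP3, z1, z2)), ab_off \<union> ab_on)))"

definition prot_step where
  "prot_step r rA rB H x acc g =
     (let (sts, ab) = acc; (st, ab') = prot_gate r rA rB H x sts g in (sts @ [st], ab \<union> ab'))"

definition prot_run :: "(nat \<Rightarrow> nat \<Rightarrow> 'l::len word) \<Rightarrow> (nat \<Rightarrow> 'l word) \<Rightarrow> (nat \<Rightarrow> 'l word)
    \<Rightarrow> ('l word \<Rightarrow> 'h) \<Rightarrow> (nat \<Rightarrow> 'l word) \<Rightarrow> gate list \<Rightarrow> 'l wst list \<times> nat set" where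
  "prot_run r rA rB H x C = foldl (prot_step r rA rB H x) ([], {}) C"

text \<open>Output reconstruction of wire state st by party p; None means abort.\<close>
definition prot_output :: "('l::len word \<Rightarrow> 'h) \<Rightarrow> 'l wst \<Rightarrow> nat \<Rightarrow> 'l word option" where
  "prot_output H st p = (let ((l1, l2, l3), (mP1, l2P1, l3P1), (mP2, l3P2, l1P2), (mP3, l1P3, l2P3)) = st in
     if p = 0 then (let mr = mP1 in if H mr \<noteq> H mP2 then None else Some (mr - l1 - l2 - l3))
     else if p = 1 then (let lr = l1P2 in if H lr \<noteq> H l1 then None else Some (mP1 - lr - l2P1 - l3P1))
     else if p = 2 then (let lr = l2P3 in if H lr \<noteq> H l2 then None else Some (mP2 - l1P2 - lr - l3P2))
     else (let lr = l3P1 in if H lr \<noteq> H l3 then None else Some (mP3 - l1P3 - l2P3 - lr)))"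

end

theory Submission
  imports Defs
begin

text \<open>An honest run keeps every wire state of the form shared v l1 l2 l3, where v is
  the value on the wire. Input and addition gates preserve this by linearity. At a
  multiplication gate the three gamma values sum to lambda_x lambda_y because
  A + B + Gamma = 0, hence m'_1 + m'_2 + m'_3 + m_x m_y
  = (m_x - lambda_x)(m_y - lambda_y) + lambda_z = x y + lambda_z.
  Honest parties compute identical values wherever the protocol compares two copies,
  so every hash check passes and nobody aborts.\<close>

definition shared :: "'l::len word \<Rightarrow> 'l word \<Rightarrow> 'l word \<Rightarrow> 'l word \<Rightarrow> 'l wst" where
  "shared v l1 l2 l3 =
     (let m = v + (l1 + l2 + l3) in ((l1, l2, l3), (m, l2, l3), (m, l3, l1), (m, l1, l2)))"

lemma is_sharing_iff_shared: "is_sharing st v \<longleftrightarrow> (\<exists>l1 l2 l3. st = shared v l1 l2 l3)"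
  by (auto simp: is_sharing_def shared_def Let_def)

lemma is_sharing_shared: "is_sharing (shared v l1 l2 l3) v"
  by (auto simp: is_sharing_iff_shared)

lemma prot_output_sharing:
  assumes "is_sharing st v"
  shows "prot_output H st p = Some v"
  using assms by (auto simp: is_sharing_def prot_output_def algebra_simps)

lemma masked_product:
  fixes a1 a2 a3 b1 b2 b3 A B :: "'a::comm_ring_1"
  assumes "mx = x + (a1 + a2 + a3)" and "my = y + (b1 + b2 + b3)"
  shows "(- a1 * my - b1 * mx + (a1 * b1 + a1 * b2 + a2 * b1 + (- A - B)) + z1)
       + (- a2 * my - b2 * mx + (a2 * b2 + a2 * b3 + a3 * b2 + A) + z2)
       + (- a3 * my - b3 * mx + (a3 * b3 + a3 * b1 + a1 * b3 + B) + z3)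
       + mx * my = x * y + (z1 + z2 + z3)"
  using assms by (simp add: algebra_simps)

lemma prot_gate_Inp:
  "prot_gate r rA rB H x sts (Inp p) =
     (shared (x (length sts)) (r (length sts) 1) (r (length sts) 2) (r (length sts) 3), {})"
  by (simp add: prot_gate_def shared_def Let_def)

lemma prot_gate_AddG:
  assumes "sts ! i = shared a a1 a2 a3" and "sts ! j = shared b b1 b2 b3"
  shows "prot_gate r rA rB H x sts (AddG i j) = (shared (a + b) (a1 + b1) (a2 + b2) (a3 + b3), {})"
  using assms by (simp add: prot_gate_def shared_def Let_def algebra_simps)

lemma prot_gate_MulG:
  assumes "sts ! i = shared a a1 a2 a3" and "sts ! j = shared b b1 b2 b3"
  shows "prot_gate r rA rB H x sts (MulG i j) =
     (shared (a * b) (r (length sts) 1) (r (length sts) 2) (r (length sts) 3), {})"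
  using assms masked_product[of _ a a1 a2 a3 _ b b1 b2 b3]
  by (simp add: prot_gate_def shared_def Let_def)

definition gate_wf :: "nat \<Rightarrow> gate \<Rightarrow> bool" where
  "gate_wf w g \<longleftrightarrow> (case g of
      Inp p \<Rightarrow> p \<le> 3
    | AddG i j \<Rightarrow> i < w \<and> j < w
    | MulG i j \<Rightarrow> i < w \<and> j < w)"

lemma wf_circ_snoc: "wf_circ (C @ [g]) \<longleftrightarrow> wf_circ C \<and> gate_wf (length C) g"
  by (auto simp: wf_circ_def gate_wf_def nth_append less_Suc_eq)

lemma eval_circ_snoc: "eval_circ (C @ [g]) x = eval_step x (eval_circ C x) g"
  by (simp add: eval_circ_def)

lemma prot_run_snoc:
  "prot_run r rA rB H x (C @ [g]) =
     (let (sts, ab) = prot_run r rA rB H x C; (st, ab') = prot_gate r rA rB H x sts g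
      in (sts @ [st], ab \<union> ab'))"
  by (simp add: prot_run_def prot_step_def)

lemma length_eval_circ: "length (eval_circ C x) = length C"
  by (induction C rule: rev_induct) (simp_all add: eval_circ_def eval_step_def)

lemma list_all2_is_sharing_nth:
  assumes "list_all2 is_sharing sts vs" and "i < length vs"
  obtains l1 l2 l3 where "sts ! i = shared (vs ! i) l1 l2 l3"
  using assms by (auto simp: list_all2_conv_all_nth is_sharing_iff_shared)

lemma prot_gate_sharing:
  assumes sh: "list_all2 is_sharing sts vs" and wf: "gate_wf (length vs) g"
  obtains st v where "prot_gate r rA rB H x sts g = (st, {})"
    and "eval_step x vs g = vs @ [v]" and "is_sharing st v"
proof (cases g)
  case (Inp p)
  then show ?thesis
    using list_all2_lengthD[OF sh]
    by (intro that) (simp add: eval_step_def prot_gate_Inp is_sharing_shared)+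
next
  case (AddG i j)
  with wf obtain a1 a2 a3 b1 b2 b3
    where "sts ! i = shared (vs ! i) a1 a2 a3" and "sts ! j = shared (vs ! j) b1 b2 b3"
    by (auto simp: gate_wf_def elim!: list_all2_is_sharing_nth[OF sh])
  with AddG show ?thesis
    by (intro that) (simp add: eval_step_def prot_gate_AddG is_sharing_shared)+
next
  case (MulG i j)
  with wf obtain a1 a2 a3 b1 b2 b3
    where "sts ! i = shared (vs ! i) a1 a2 a3" and "sts ! j = shared (vs ! j) b1 b2 b3"
    by (auto simp: gate_wf_def elim!: list_all2_is_sharing_nth[OF sh])
  with MulG show ?thesis
    by (intro that) (simp add: eval_step_def prot_gate_MulG is_sharing_shared)+
qed

lemma prot_run_sharing:
  assumes "wf_circ C"
  shows "list_all2 is_sharing (fst (prot_run r rA rB H x C)) (eval_circ C x)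
    \<and> snd (prot_run r rA rB H x C) = {}"
  using assms
proof (induction C rule: rev_induct)
  case Nil
  then show ?case by (simp add: prot_run_def eval_circ_def)
next
  case (snoc g C)
  obtain sts ab where run: "prot_run r rA rB H x C = (sts, ab)" by fastforce
  from snoc run have sh: "list_all2 is_sharing sts (eval_circ C x)" and "ab = {}"
    by (auto simp: wf_circ_snoc)
  moreover have "gate_wf (length (eval_circ C x)) g"
    using snoc.prems by (simp add: wf_circ_snoc length_eval_circ)
  ultimately obtain st v where "prot_gate r rA rB H x sts g = (st, {})"
    and "eval_step x (eval_circ C x) g = eval_circ C x @ [v]" and "is_sharing st v"
    using prot_gate_sharing[OF sh] by metis
  with sh \<open>ab = {}\<close> run show ?case
    by (simp add: prot_run_snoc eval_circ_snoc list_all2_appendI)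
qed

theorem theorem1:
  fixes C :: "gate list" and x :: "nat \<Rightarrow> 'l::len word"
    and r :: "nat \<Rightarrow> nat \<Rightarrow> 'l word" and rA rB :: "nat \<Rightarrow> 'l word"
    and H :: "'l word \<Rightarrow> 'h" and outs :: "nat set"
  assumes "wf_circ C" and "outs \<subseteq> {..<length C}"
  shows "snd (prot_run r rA rB H x C) = {}
    \<and> length (fst (prot_run r rA rB H x C)) = length C
    \<and> (\<forall>w<length C. is_sharing (fst (prot_run r rA rB H x C) ! w) (eval_circ C x ! w))
    \<and> (\<forall>v\<in>outs. \<forall>p\<le>3. prot_output H (fst (prot_run r rA rB H x C) ! v) p
                        = Some (eval_circ C x ! v))"
proof -
  from prot_run_sharing[OF assms(1)]
  have sh: "list_all2 is_sharing (fst (prot_run r rA rB H x C)) (eval_circ C x)"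
    and no_abort: "snd (prot_run r rA rB H x C) = {}"
    by blast+
  then have len: "length (fst (prot_run r rA rB H x C)) = length C"
    by (simp add: list_all2_lengthD length_eval_circ)
  with sh have wires: "\<forall>w<length C. is_sharing (fst (prot_run r rA rB H x C) ! w) (eval_circ C x ! w)"
    by (simp add: list_all2_nthD)
  with assms(2) have "\<forall>v\<in>outs. \<forall>p\<le>3. prot_output H (fst (prot_run r rA rB H x C) ! v) p
                        = Some (eval_circ C x ! v)"
    by (auto intro: prot_output_sharing)
  with no_abort len wires show ?thesis
    by blast
qed

end
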